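(* Let $L=\langle S,A,\to\rangle$ be a labelled transition system and $x,y\in\{o,b\}$. Then $\mathrel{\underline{\leftrightarrow}}^{ed}_{(x,y)}$ has the stuttering property: whenever $t_0\xrightarrow{\tau}t_1\xrightarrow{\tau}\cdots\xrightarrow{\tau}t_k$ with $t_0\mathrel{\underline{\leftrightarrow}}^{ed}_{(x,y)}t_k$, then $t_i\mathrel{\underline{\leftrightarrow}}^{ed}_{(x,y)}t_j$ for all $0\le i,j\le k$.
   Context: An LTS is $\langle S,A,\to\rangle$ with states $S$, actions $A$ containing the internal action $\tau$, and $\to\subseteq S\times A\times S$; write $s\xrightarrow{a}t$, $\twoheadrightarrow$ for the reflexive-transitive and $\twoheadrightarrow^+$ for the transitive closure of $\xrightarrow{\tau}$. For $R\subseteq S\times S$ and $s,s',t$: $s\twoheadrightarrow_{o,R,t}s'$ iff $s\twoheadrightarrow s'$; $s\twoheadrightarrow_{b,R,t}s'$ iff $s\twoheadrightarrow s'$, $t\,R\,s$ and $t\,R\,s'$. For $x,y\in\{o,b\}$, a symmetric $R$ is an $(x,y)$-generic bisimulation if whenever $s\,R\,t$ and $s\xrightarrow{a}s'$, either $a=\tau$ and $s'\,R\,t$, or there exist $t',t_1,t_2$ with $t\twoheadrightarrow_{x,R,s}t_1\xrightarrow{a}t_2\twoheadrightarrow_{y,R,s'}t'$ and $s'\,R\,t'$. $R$ is an $(x,y)$-generic bisimulation with explicit divergence if it is an $(x,y)$-generic bisimulation and for all $s\,R\,t$, if there is an infinite sequence $s=s_0\xrightarrow{\tau}s_1\xrightarrow{\tau}s_2\cdots$,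 then there exist $t'$ with $t\twoheadrightarrow^+t'$ and some $k$ with $s_k\,R\,t'$. $s\mathrel{\underline{\leftrightarrow}}^{ed}_{(x,y)}t$ iff some such relation relates $s$ and $t$. *)

theory Defs
  imports Main
begin

text \<open>A labelled transition system is given by a transition relation
  lts s a t (meaning s --a--> t) over a state type 's and an action type 'a,
  together with a distinguished internal action tau.\<close>

datatype mode = Mo | Mb

definition tau_step :: "('s \<Rightarrow> 'a \<Rightarrow> 's \<Rightarrow> bool) \<Rightarrow> 'a \<Rightarrow> 's \<Rightarrow> 's \<Rightarrow> bool" where
  "tau_step lts tau s t \<longleftrightarrow> lts s tau t"

definition tau_star :: "('s \<Rightarrow> 'a \<Rightarrow> 's \<Rightarrow> bool) \<Rightarrow> 'a \<Rightarrow> 's \<Rightarrow> 's \<Rightarrow> bool" where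
  "tau_star lts tau = (tau_step lts tau)\<^sup>*\<^sup>*"

definition tau_plus :: "('s \<Rightarrow> 'a \<Rightarrow> 's \<Rightarrow> bool) \<Rightarrow> 'a \<Rightarrow> 's \<Rightarrow> 's \<Rightarrow> bool" where
  "tau_plus lts tau = (tau_step lts tau)\<^sup>+\<^sup>+"

definition mode_star ::
  "('s \<Rightarrow> 'a \<Rightarrow> 's \<Rightarrow> bool) \<Rightarrow> 'a \<Rightarrow> mode \<Rightarrow> ('s \<Rightarrow> 's \<Rightarrow> bool) \<Rightarrow> 's \<Rightarrow> 's \<Rightarrow> 's \<Rightarrow> bool" where
  "mode_star lts tau x R t s s' \<longleftrightarrow>
     (case x of
        Mo \<Rightarrow> tau_star lts tau s s'
      | Mb \<Rightarrow> tau_star lts tau s s' \<and> R t s \<and> R t s')"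

definition generic_bisim ::
  "('s \<Rightarrow> 'a \<Rightarrow> 's \<Rightarrow> bool) \<Rightarrow> 'a \<Rightarrow> mode \<Rightarrow> mode \<Rightarrow> ('s \<Rightarrow> 's \<Rightarrow> bool) \<Rightarrow> bool" where
  "generic_bisim lts tau x y R \<longleftrightarrow>
     symp R \<and>
     (\<forall>s t a s'. R s t \<and> lts s a s' \<longrightarrow>
        (a = tau \<and> R s' t) \<or>
        (\<exists>t' t1 t2. mode_star lts tau x R s t t1 \<and> lts t1 a t2 \<and>
                    mode_star lts tau y R s' t2 t' \<and> R s' t'))"

definition generic_bisim_ed ::
  "('s \<Rightarrow> 'a \<Rightarrow> 's \<Rightarrow> bool) \<Rightarrow> 'a \<Rightarrow> mode \<Rightarrow> mode \<Rightarrow> ('s \<Rightarrow> 's \<Rightarrow> bool) \<Rightarrow> bool" where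
  "generic_bisim_ed lts tau x y R \<longleftrightarrow>
     generic_bisim lts tau x y R \<and>
     (\<forall>s t. R s t \<longrightarrow>
        (\<forall>f :: nat \<Rightarrow> 's. f 0 = s \<and> (\<forall>i. lts (f i) tau (f (Suc i))) \<longrightarrow>
           (\<exists>t' k. tau_plus lts tau t t' \<and> R (f k) t')))"

definition bisimilar_ed ::
  "('s \<Rightarrow> 'a \<Rightarrow> 's \<Rightarrow> bool) \<Rightarrow> 'a \<Rightarrow> mode \<Rightarrow> mode \<Rightarrow> 's \<Rightarrow> 's \<Rightarrow> bool" where
  "bisimilar_ed lts tau x y s t \<longleftrightarrow>
     (\<exists>R. generic_bisim_ed lts tau x y R \<and> R s t)"

end

theory Submission
  imports Defs
begin

text \<open>Relax the transfer condition so that a \<open>\<tau>\<close>-step of \<open>s\<close> may also be answered by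
  a \<open>\<tau>\<close>-path of \<open>t\<close> (rather than by \<open>t\<close> standing still); call the symmetric relations
  satisfying it together with explicit divergence semi-bisimulations, and \<open>\<approx>\<close> the largest one.
  Every generic bisimulation with explicit divergence is a semi-bisimulation. Semi-bisimulations
  can be pushed along \<open>\<tau>\<close>-paths: if \<open>u \<twoheadrightarrow> s\<close> and \<open>u R t\<close>, then \<open>s R t'\<close> for some \<open>t \<twoheadrightarrow> t'\<close>.
  Hence the pairs \<open>(s, t)\<close> with \<open>u \<twoheadrightarrow> s \<twoheadrightarrow> v\<close> and \<open>u \<approx> t \<approx> v\<close> form a semi-bisimulation,
  i.e. \<open>\<approx>\<close> is closed under stuttering. This closure is exactly what makes \<open>\<approx>\<close> a genuine
  generic bisimulation: a \<open>\<tau>\<close>-answer \<open>t \<twoheadrightarrow> t\<^sub>1 \<rightarrow> t'\<close> in branching mode needs \<open>s \<approx> t\<^sub>1\<close>, and \<open>t\<^sub>1\<close>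
  lies between \<open>t \<approx> s\<close> and \<open>t' \<approx> s\<close>. So \<open>\<approx>\<close> coincides with bisimilarity with explicit
  divergence, which therefore has the stuttering property.\<close>

context
  fixes lts :: "'s \<Rightarrow> 'a \<Rightarrow> 's \<Rightarrow> bool" and tau :: 'a and x y :: mode
begin

definition explicit_divergence :: "('s \<Rightarrow> 's \<Rightarrow> bool) \<Rightarrow> bool" where
  "explicit_divergence R \<longleftrightarrow>
     (\<forall>s t f. R s t \<and> f 0 = s \<and> (\<forall>i. lts (f i) tau (f (Suc i))) \<longrightarrow>
        (\<exists>t' k. tau_plus lts tau t t' \<and> R (f k) t'))"

lemma generic_bisim_ed_iff:
  "generic_bisim_ed lts tau x y R \<longleftrightarrow> generic_bisim lts tau x y R \<and> explicit_divergence R"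
  unfolding generic_bisim_ed_def explicit_divergence_def by blast

lemma explicit_divergenceD:
  assumes "explicit_divergence R" "R s t" "f 0 = s" "\<forall>i. lts (f i) tau (f (Suc i))"
  shows "\<exists>t' k. tau_plus lts tau t t' \<and> R (f k) t'"
  using assms unfolding explicit_divergence_def by blast

definition semi_match :: "('s \<Rightarrow> 's \<Rightarrow> bool) \<Rightarrow> 's \<Rightarrow> 's \<Rightarrow> 'a \<Rightarrow> 's \<Rightarrow> bool" where
  "semi_match R s t a s' \<longleftrightarrow>
     (a = tau \<and> (\<exists>t'. mode_star lts tau x R s t t' \<and> R s' t')) \<or>
     (\<exists>t' t1 t2. mode_star lts tau x R s t t1 \<and> lts t1 a t2 \<and>
                 mode_star lts tau y R s' t2 t' \<and> R s' t')"

definition semi_bisim :: "('s \<Rightarrow> 's \<Rightarrow> bool) \<Rightarrow> bool" where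
  "semi_bisim R \<longleftrightarrow> symp R \<and>
     (\<forall>s t a s'. R s t \<and> lts s a s' \<longrightarrow> semi_match R s t a s') \<and> explicit_divergence R"

definition semi_bisimilar :: "'s \<Rightarrow> 's \<Rightarrow> bool" where
  "semi_bisimilar s t \<longleftrightarrow> (\<exists>R. semi_bisim R \<and> R s t)"

lemma semi_bisimI:
  assumes "\<And>s t. R s t \<Longrightarrow> R t s"
    and "\<And>s t a s'. R s t \<Longrightarrow> lts s a s' \<Longrightarrow> semi_match R s t a s'"
    and "explicit_divergence R"
  shows "semi_bisim R"
  using assms unfolding semi_bisim_def by (blast intro: sympI)

lemma semi_bisim_sym: "semi_bisim R \<Longrightarrow> R s t \<Longrightarrow> R t s"
  unfolding semi_bisim_def by (blast dest: sympD)

lemma semi_bisim_match: "semi_bisim R \<Longrightarrow> R s t \<Longrightarrow> lts s a s' \<Longrightarrow> semi_match R s t a s'"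
  unfolding semi_bisim_def by blast

lemma semi_bisim_explicit_divergence: "semi_bisim R \<Longrightarrow> explicit_divergence R"
  unfolding semi_bisim_def by blast

lemma mode_star_tau_star: "mode_star lts tau m R s t t' \<Longrightarrow> tau_star lts tau t t'"
  by (cases m) (simp_all add: mode_star_def)

lemma mode_star_refl: "R s t \<Longrightarrow> mode_star lts tau m R s t t"
  by (cases m) (simp_all add: mode_star_def tau_star_def)

lemma mode_star_mono: "mode_star lts tau m R s t t' \<Longrightarrow> R \<le> R' \<Longrightarrow> mode_star lts tau m R' s t t'"
  by (cases m) (auto simp: mode_star_def)

lemma mode_star_prepend:
  assumes "mode_star lts tau m R s t t'" "tau_star lts tau q t" "R' s q" "R \<le> R'"
  shows "mode_star lts tau m R' s q t'"
  using assms by (cases m) (auto simp: mode_star_def tau_star_def)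

lemma semi_match_prepend:
  assumes "semi_match R s t a s'" "tau_star lts tau q t" "R' s q" "R \<le> R'"
  shows "semi_match R' s q a s'"
  using assms(1) mode_star_prepend[OF _ assms(2-4)] mode_star_mono[OF _ assms(4)] assms(4)
  unfolding semi_match_def by blast

lemma semi_match_tau_star:
  assumes "semi_match R s t tau s'"
  shows "\<exists>t'. tau_star lts tau t t' \<and> R s' t'"
  using assms unfolding semi_match_def
proof (elim disjE exE conjE)
  fix t' t1 t2
  assume "mode_star lts tau x R s t t1" "lts t1 tau t2" "mode_star lts tau y R s' t2 t'" "R s' t'"
  then have "(tau_step lts tau)\<^sup>*\<^sup>* t t1" "tau_step lts tau t1 t2" "(tau_step lts tau)\<^sup>*\<^sup>* t2 t'"
    by (auto dest!: mode_star_tau_star simp: tau_star_def tau_step_def)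
  then have "tau_star lts tau t t'"
    unfolding tau_star_def by (meson converse_rtranclp_into_rtranclp rtranclp_trans)
  with \<open>R s' t'\<close> show ?thesis by blast
qed (blast dest: mode_star_tau_star)

lemma generic_bisim_ed_semi_bisim:
  assumes "generic_bisim_ed lts tau x y R"
  shows "semi_bisim R"
  using assms mode_star_refl[of R]
  unfolding generic_bisim_ed_iff generic_bisim_def semi_bisim_def semi_match_def
  by blast

lemma semi_bisim_semi_bisimilar: "semi_bisim semi_bisimilar"
proof (rule semi_bisimI)
  show "semi_bisimilar t s" if "semi_bisimilar s t" for s t
    using that semi_bisim_sym unfolding semi_bisimilar_def by blast
next
  fix s t a s'
  assume st: "semi_bisimilar s t" and "lts s a s'"
  then obtain R where R: "semi_bisim R" "R s t"
    unfolding semi_bisimilar_def by blast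
  have "R \<le> semi_bisimilar"
    using R(1) unfolding semi_bisimilar_def by auto
  with semi_bisim_match[OF R \<open>lts s a s'\<close>] st show "semi_match semi_bisimilar s t a s'"
    by (simp add: semi_match_prepend tau_star_def)
next
  show "explicit_divergence semi_bisimilar"
    unfolding explicit_divergence_def semi_bisimilar_def
    by (metis explicit_divergenceD semi_bisim_explicit_divergence)
qed

lemma semi_bisimilar_sym: "semi_bisimilar s t \<Longrightarrow> semi_bisimilar t s"
  by (rule semi_bisim_sym[OF semi_bisim_semi_bisimilar])

lemma semi_bisimilar_refl: "semi_bisimilar s s"
proof -
  have "semi_bisim (=)"
  proof (rule semi_bisimI)
    fix s t a s' assume "s = t" "lts s a s'"
    then show "semi_match (=) s t a s'"
      unfolding semi_match_def by (blast intro: mode_star_refl)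
  next
    have "tau_plus lts tau (f 0) (f 1)" if "\<forall>i. lts (f i) tau (f (Suc i))" for f :: "nat \<Rightarrow> 's"
      using that unfolding tau_plus_def tau_step_def by (simp add: tranclp.r_into_trancl)
    then show "explicit_divergence (=)"
      unfolding explicit_divergence_def by blast
  qed simp
  then show ?thesis
    unfolding semi_bisimilar_def by blast
qed

lemma semi_bisim_tau_star_transfer:
  assumes "semi_bisim R" "tau_star lts tau u s" "R u t"
  shows "\<exists>t'. tau_star lts tau t t' \<and> R s t'"
  using assms(2) unfolding tau_star_def
proof (induction rule: rtranclp_induct)
  case base
  with assms(3) show ?case by blast
next
  case (step s s')
  then obtain t' where t': "(tau_step lts tau)\<^sup>*\<^sup>* t t'" "R s t'"
    by blast
  from \<open>tau_step lts tau s s'\<close> have "lts s tau s'"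
    by (simp add: tau_step_def)
  from semi_match_tau_star[OF semi_bisim_match[OF assms(1) t'(2) this]] t'(1)
  show ?case
    unfolding tau_star_def by (blast intro: rtranclp_trans)
qed

definition stutter_related :: "'s \<Rightarrow> 's \<Rightarrow> bool" where
  "stutter_related s t \<longleftrightarrow>
     (\<exists>u v. tau_star lts tau u s \<and> tau_star lts tau s v \<and> semi_bisimilar u t \<and> semi_bisimilar v t)"

lemma semi_bisimilar_stutter_related: "semi_bisimilar s t \<Longrightarrow> stutter_related s t"
  unfolding stutter_related_def tau_star_def by blast

lemma stutter_related_partner:
  assumes "stutter_related s t \<or> stutter_related t s"
  shows "\<exists>t'. tau_star lts tau t t' \<and> semi_bisimilar s t'"
  using assms semi_bisim_tau_star_transfer[OF semi_bisim_semi_bisimilar] semi_bisimilar_sym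
  unfolding stutter_related_def by blast

lemma semi_bisim_stutter_related: "semi_bisim (\<lambda>s t. stutter_related s t \<or> stutter_related t s)"
  (is "semi_bisim ?S")
proof (rule semi_bisimI)
  have le: "semi_bisimilar \<le> ?S"
    using semi_bisimilar_stutter_related by auto
  fix s t a s'
  assume "?S s t" "lts s a s'"
  moreover obtain t' where "tau_star lts tau t t'" "semi_bisimilar s t'"
    using stutter_related_partner[OF \<open>?S s t\<close>] by blast
  ultimately show "semi_match ?S s t a s'"
    using semi_match_prepend[OF semi_bisim_match[OF semi_bisim_semi_bisimilar] _ _ le] by blast
next
  show "explicit_divergence ?S"
    unfolding explicit_divergence_def
  proof (intro allI impI, elim conjE)
    fix s t and f :: "nat \<Rightarrow> 's"
    assume "?S s t" "f 0 = s" "\<forall>i. lts (f i) tau (f (Suc i))"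
    obtain t' where t': "tau_star lts tau t t'" "semi_bisimilar s t'"
      using stutter_related_partner[OF \<open>?S s t\<close>] by blast
    obtain t'' k where "tau_plus lts tau t' t''" "semi_bisimilar (f k) t''"
      using explicit_divergenceD[OF semi_bisim_explicit_divergence[OF semi_bisim_semi_bisimilar] t'(2)] \<open>f 0 = s\<close> \<open>\<forall>i. _\<close>
      by blast
    with t'(1) show "\<exists>t' k. tau_plus lts tau t t' \<and> ?S (f k) t'"
      unfolding tau_star_def tau_plus_def
      by (blast intro: rtranclp_tranclp_tranclp semi_bisimilar_stutter_related)
  qed
qed (blast)

lemma stutter_related_semi_bisimilar: "stutter_related s t \<Longrightarrow> semi_bisimilar s t"
  using semi_bisim_stutter_related unfolding semi_bisimilar_def by blast

lemma semi_bisimilar_tau_answer: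
  assumes "mode_star lts tau x semi_bisimilar s t t'" "semi_bisimilar s' t'"
  shows "semi_bisimilar s' t \<or>
    (\<exists>t1. mode_star lts tau x semi_bisimilar s t t1 \<and> lts t1 tau t')"
proof -
  have "(tau_step lts tau)\<^sup>*\<^sup>* t t'"
    using mode_star_tau_star[OF assms(1)] by (simp add: tau_star_def)
  then show ?thesis
  proof (cases rule: rtranclp.cases)
    case rtrancl_refl
    with assms(2) show ?thesis by blast
  next
    case (rtrancl_into_rtrancl t1)
    then have "tau_star lts tau t t1" "tau_star lts tau t1 t'" "lts t1 tau t'"
      by (auto simp: tau_star_def tau_step_def)
    moreover have "semi_bisimilar s t1" if "x = Mb"
    proof -
      have "semi_bisimilar t s" "semi_bisimilar t' s"
        using assms(1) that semi_bisimilar_sym by (auto simp: mode_star_def)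
      with \<open>tau_star lts tau t t1\<close> \<open>tau_star lts tau t1 t'\<close> have "stutter_related t1 s"
        unfolding stutter_related_def by blast
      then show ?thesis
        by (blast intro: semi_bisimilar_sym stutter_related_semi_bisimilar)
    qed
    ultimately have "mode_star lts tau x semi_bisimilar s t t1"
      using assms(1) by (cases x) (auto simp: mode_star_def)
    with \<open>lts t1 tau t'\<close> show ?thesis by blast
  qed
qed

lemma generic_bisim_ed_semi_bisimilar: "generic_bisim_ed lts tau x y semi_bisimilar"
  unfolding generic_bisim_ed_iff generic_bisim_def
proof (intro conjI allI impI)
  show "symp semi_bisimilar"
    by (blast intro: sympI semi_bisimilar_sym)
  show "explicit_divergence semi_bisimilar"
    by (rule semi_bisim_explicit_divergence[OF semi_bisim_semi_bisimilar])
next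
  fix s t a s'
  assume "semi_bisimilar s t \<and> lts s a s'"
  then have "semi_match semi_bisimilar s t a s'"
    by (blast intro: semi_bisim_match[OF semi_bisim_semi_bisimilar])
  then show "(a = tau \<and> semi_bisimilar s' t) \<or>
    (\<exists>t' t1 t2. mode_star lts tau x semi_bisimilar s t t1 \<and> lts t1 a t2 \<and>
       mode_star lts tau y semi_bisimilar s' t2 t' \<and> semi_bisimilar s' t')"
    unfolding semi_match_def
    using semi_bisimilar_tau_answer mode_star_refl[of semi_bisimilar] by blast
qed

lemma bisimilar_ed_eq_semi_bisimilar: "bisimilar_ed lts tau x y = semi_bisimilar"
proof (intro ext iffI)
  show "semi_bisimilar s t" if "bisimilar_ed lts tau x y s t" for s t
    using that generic_bisim_ed_semi_bisim unfolding bisimilar_ed_def semi_bisimilar_def by blast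
  show "bisimilar_ed lts tau x y s t" if "semi_bisimilar s t" for s t
    using that generic_bisim_ed_semi_bisimilar unfolding bisimilar_ed_def by blast
qed

lemma bisimilar_ed_sym: "bisimilar_ed lts tau x y s t \<Longrightarrow> bisimilar_ed lts tau x y t s"
  by (simp add: bisimilar_ed_eq_semi_bisimilar semi_bisimilar_sym)

lemma bisimilar_ed_stuttering:
  assumes "tau_star lts tau s u" "tau_star lts tau u v" "bisimilar_ed lts tau x y s v"
  shows "bisimilar_ed lts tau x y s u" "bisimilar_ed lts tau x y u v"
proof -
  have refl: "tau_star lts tau w w" for w
    by (simp add: tau_star_def)
  have "semi_bisimilar s v"
    using assms(3) by (simp add: bisimilar_ed_eq_semi_bisimilar)
  then have "stutter_related u s" "stutter_related u v"
    using assms(1,2) refl semi_bisimilar_refl semi_bisimilar_sym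
    unfolding stutter_related_def by blast+
  then show "bisimilar_ed lts tau x y s u" "bisimilar_ed lts tau x y u v"
    by (simp_all add: bisimilar_ed_eq_semi_bisimilar stutter_related_semi_bisimilar semi_bisimilar_sym)
qed

end

lemma tau_path_tau_star:
  assumes "\<forall>i<k. lts (t i) tau (t (Suc i))" "i \<le> j" "j \<le> k"
  shows "tau_star lts tau (t i) (t j)"
  using assms(2,3)
proof (induction j rule: dec_induct)
  case base
  show ?case by (simp add: tau_star_def)
next
  case (step j)
  then have "tau_step lts tau (t j) (t (Suc j))"
    using assms(1) by (simp add: tau_step_def)
  with step show ?case
    by (simp add: tau_star_def)
qed

theorem lemma6p3:
  fixes lts :: "'s \<Rightarrow> 'a \<Rightarrow> 's \<Rightarrow> bool" and tau :: 'a
    and x y :: mode and t :: "nat \<Rightarrow> 's" and k :: nat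
  assumes "\<forall>i<k. lts (t i) tau (t (Suc i))"
    and "bisimilar_ed lts tau x y (t 0) (t k)"
  shows "\<forall>i\<le>k. \<forall>j\<le>k. bisimilar_ed lts tau x y (t i) (t j)"
proof -
  have path: "tau_star lts tau (t i) (t j)" if "i \<le> j" "j \<le> k" for i j
    using tau_path_tau_star[of k lts t tau i j] assms(1) that by blast
  have "bisimilar_ed lts tau x y (t i) (t j)" if "i \<le> j" "j \<le> k" for i j
  proof -
    have "bisimilar_ed lts tau x y (t i) (t k)"
      using bisimilar_ed_stuttering(2)[OF path path assms(2)] that by simp
    with bisimilar_ed_stuttering(1)[OF path path] that show ?thesis
      by simp
  qed
  then show ?thesis
    by (metis bisimilar_ed_sym nat_le_linear)
qed

end
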